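(* Let $n,b$ be integers with $1<n<b$, let $p=(d_k,\ldots,d_0)_b=n\cdot(d_{\sigma(k)},\ldots,d_{\sigma(0)})_b$ be an $(n,b,\sigma)$-permutiple with carries $c_k,\ldots,c_1,c_0=0$, and let $S=\bigl((c_0,c_1),\ldots,(c_{k-1},c_k),(c_k,c_0)\bigr)$ be its state-transition sequence. Let $\varphi$ be a symmetry of $p$ which fixes $S$, and let $\psi$ be the $(k+1)$-cycle $(0,1,\ldots,k)$. (a) If $0\le j\le k$ and $c_j=0$ (so that $p_{\psi^j}$ is a rotational sibling of $p$), then $\varphi\psi^j$ is also a symmetry of $p$; in particular $(d_{\varphi\psi^j(k)},\ldots,d_{\varphi\psi^j(0)})_b=n\cdot(d_{\sigma\varphi\psi^j(k)},\ldots,d_{\sigma\varphi\psi^j(0)})_b$ is an $(n,b,\psi^{-j}\varphi^{-1}\sigma\varphi\psi^j)$-permutiple. (b) If $0<j\le k$ and $c_j=n-1$ (so that $\overline{p}_{\psi^j}$ is a reflective sibling of $p$), then $(\overline{d}_{\varphi\psi^j(k)},\ldots,\overline{d}_{\varphi\psi^j(0)})_b=n\cdot(\overline{d}_{\sigma\varphi\psi^j(k)},\ldots,\overline{d}_{\sigma\varphi\psi^j(0)})_b$, i.e. this number is an $(n,b,\psi^{-j}\varphi^{-1}\sigma\varphi\psi^j)$-permutiple.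
   Context: For digits $0\le e_i<b$, $(e_k,\ldots,e_0)_b=\sum_ie_ib^i$ (leading zero digits allowed). For a permutation $\tau$ of $\{0,\ldots,k\}$, $(e_k,\ldots,e_0)_b$ is an $(n,b,\tau)$-permutiple if $(e_k,\ldots,e_0)_b=n\cdot(e_{\tau(k)},\ldots,e_{\tau(0)})_b$. The carries of $p$ are $c_0=0$, $c_{i+1}=\lfloor (nd_{\sigma(i)}+c_i)/b\rfloor$ for $0\le i\le k$ (so $c_{k+1}=0$ and $n d_{\sigma(i)}-d_i+c_i=bc_{i+1}$). The permutiple string of $p$ is $s=(d_0,d_{\sigma(0)})\cdots(d_k,d_{\sigma(k)})$. A permutation $\varphi$ of $\{0,\ldots,k\}$ is a symmetry of $p$ if $(d_{\varphi(k)},\ldots,d_{\varphi(0)})_b=n\cdot(d_{\sigma\varphi(k)},\ldots,d_{\sigma\varphi(0)})_b$ (reordering the inputs of $s$ by $\varphi$ yields another permutiple string). A symmetry $\varphi$ fixes $S$ if $S_\varphi=S$, where $S_\varphi=\bigl((c_{\varphi(0)},c_{\varphi(1)}),\ldots,(c_{\varphi(k-1)},c_{\varphi(k)}),(c_{\varphi(k)},c_{\varphi(0)})\bigr)$ is the state-transition (carry) sequence of the reordered string. $\psi(i)=i+1$ for $i<k$, $\psi(k)=0$. For a digit $d$, $\overline d=b-1-d$. The rotational sibling $p_{\psi^j}$ (for $c_j=0$) is $(d_{\psi^j(k)},\ldots,d_{\psi^j(0)})_b=n\cdot(d_{\sigma\psi^j(k)},\ldots,d_{\sigma\psi^j(0)})_b$,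 and the reflective sibling $\overline{p}_{\psi^j}$ (for $c_j=n-1$) is $(\overline d_{\psi^j(k)},\ldots,\overline d_{\psi^j(0)})_b=n\cdot(\overline d_{\sigma\psi^j(k)},\ldots,\overline d_{\sigma\psi^j(0)})_b$. *)

theory Defs
  imports "HOL-Combinatorics.Permutations"
begin

definition numval :: "nat \<Rightarrow> nat \<Rightarrow> (nat \<Rightarrow> nat) \<Rightarrow> nat" where
  "numval b k e = (\<Sum>i\<le>k. e i * b ^ i)"

definition is_permutiple :: "nat \<Rightarrow> nat \<Rightarrow> nat \<Rightarrow> (nat \<Rightarrow> nat) \<Rightarrow> (nat \<Rightarrow> nat) \<Rightarrow> bool" where
  "is_permutiple n b k e \<tau> \<longleftrightarrow>
     \<tau> permutes {0..k} \<and> (\<forall>i\<le>k. e i < b) \<and>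
     numval b k e = n * numval b k (e \<circ> \<tau>)"

fun carry :: "nat \<Rightarrow> nat \<Rightarrow> (nat \<Rightarrow> nat) \<Rightarrow> (nat \<Rightarrow> nat) \<Rightarrow> nat \<Rightarrow> nat" where
  "carry n b d \<sigma> 0 = 0"
| "carry n b d \<sigma> (Suc i) = (n * d (\<sigma> i) + carry n b d \<sigma> i) div b"

definition is_symmetry :: "nat \<Rightarrow> nat \<Rightarrow> nat \<Rightarrow> (nat \<Rightarrow> nat) \<Rightarrow> (nat \<Rightarrow> nat) \<Rightarrow> (nat \<Rightarrow> nat) \<Rightarrow> bool" where
  "is_symmetry n b k d \<sigma> \<phi> \<longleftrightarrow>
     \<phi> permutes {0..k} \<and> numval b k (d \<circ> \<phi>) = n * numval b k (d \<circ> \<sigma> \<circ> \<phi>)"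

definition trans_seq :: "(nat \<Rightarrow> nat) \<Rightarrow> nat \<Rightarrow> (nat \<Rightarrow> nat) \<Rightarrow> (nat \<times> nat) list" where
  "trans_seq c k \<phi> = map (\<lambda>i. (c (\<phi> i), c (\<phi> (if i < k then i + 1 else 0)))) [0..<Suc k]"

definition cyc :: "nat \<Rightarrow> nat \<Rightarrow> nat" where
  "cyc k i = (if i < k then i + 1 else if i = k then 0 else i)"

definition dbar :: "nat \<Rightarrow> nat \<Rightarrow> nat" where
  "dbar b x = b - 1 - x"

end

theory Submission
  imports Defs "HOL-Combinatorics.Cycles"
begin

text \<open>
  Written column by column, the permutiple equation says
  \<open>n \<cdot> d (\<sigma> i) + c i = d i + b \<cdot> c (i + 1)\<close>. Since \<open>c (k + 1) = 0 = c 0\<close>, these column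
  equations close up into a cycle, so rotating the columns to start at a column with incoming
  carry 0 again yields a valid multiplication; complementing every digit and replacing every
  carry \<open>c\<close> by \<open>n - 1 - c\<close> also preserves the column equations. A symmetry \<open>\<phi>\<close> fixing \<open>S\<close>
  reorders the columns without changing the carries (the carries of the reordered string agree
  with those of \<open>p\<close> modulo \<open>b\<close> and are smaller than \<open>b\<close>), so both operations apply to
  \<open>d \<circ> \<phi>\<close>: rotating at \<open>c j = 0\<close> gives (a); complementing and then rotating at
  \<open>c j = n - 1\<close> gives (b).
\<close>

lemma numval_lessThan: "numval b k e = (\<Sum>i<Suc k. e i * b ^ i)"
  by (simp add: numval_def lessThan_Suc_atMost)

lemma digit_sum_less:
  fixes e :: "nat \<Rightarrow> nat"
  assumes "\<forall>i<m. e i < b"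
  shows "(\<Sum>i<m. e i * b ^ i) < b ^ m"
  using assms
proof (induction m)
  case 0
  then show ?case by simp
next
  case (Suc m)
  then have "(\<Sum>i<Suc m. e i * b ^ i) < e m * b ^ m + b ^ m"
    by simp
  also have "\<dots> \<le> b ^ Suc m"
    using mult_le_mono1[of "Suc (e m)" b "b ^ m"] Suc.prems by (simp add: Suc_le_eq)
  finally show ?case .
qed

lemma digit_sum_div_mod:
  fixes e :: "nat \<Rightarrow> nat"
  assumes "\<forall>l<m. e l < b" and "i < m"
  shows "((\<Sum>l<m. e l * b ^ l) + b ^ m * t) div b ^ i mod b = e i"
  using assms
proof (induction m arbitrary: t)
  case 0
  then show ?case by simp
next
  case (Suc m)
  have shift: "(\<Sum>l<Suc m. e l * b ^ l) + b ^ Suc m * t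
      = (\<Sum>l<m. e l * b ^ l) + b ^ m * (e m + b * t)"
    by (simp add: algebra_simps)
  show ?case
  proof (cases "i < m")
    case True
    then have "((\<Sum>l<m. e l * b ^ l) + b ^ m * (e m + b * t)) div b ^ i mod b = e i"
      using Suc.IH Suc.prems by simp
    then show ?thesis by (simp only: shift)
  next
    case False
    then have "i = m" using Suc.prems by simp
    have "(\<Sum>l<m. e l * b ^ l) < b ^ m"
      using Suc.prems by (intro digit_sum_less) simp
    moreover have "0 < b" using Suc.prems by auto
    ultimately have "((\<Sum>l<m. e l * b ^ l) + b ^ m * (e m + b * t)) div b ^ m = e m + b * t"
      by simp
    then show ?thesis
      using Suc.prems \<open>i = m\<close> by (simp only: shift) simp
  qed
qed

lemma carry_chain_telescope:
  fixes e f C :: "nat \<Rightarrow> 'a::comm_semiring_1"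
  assumes "\<forall>i<m. n * f i + C i = e i + b * C (Suc i)"
  shows "n * (\<Sum>i<m. f i * b ^ i) + C 0 = (\<Sum>i<m. e i * b ^ i) + b ^ m * C m"
  using assms
proof (induction m)
  case 0
  then show ?case by simp
next
  case (Suc m)
  have IH: "n * (\<Sum>i<m. f i * b ^ i) + C 0 = (\<Sum>i<m. e i * b ^ i) + b ^ m * C m"
    using Suc by simp
  have "n * (\<Sum>i<Suc m. f i * b ^ i) + C 0 = (n * (\<Sum>i<m. f i * b ^ i) + C 0) + b ^ m * (n * f m)"
    by (simp add: algebra_simps)
  also have "\<dots> = (\<Sum>i<m. e i * b ^ i) + b ^ m * (n * f m + C m)"
    by (simp only: IH) (simp add: algebra_simps)
  also have "\<dots> = (\<Sum>i<m. e i * b ^ i) + b ^ m * (e m + b * C (Suc m))"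
    using Suc.prems by simp
  also have "\<dots> = (\<Sum>i<Suc m. e i * b ^ i) + b ^ Suc m * C (Suc m)"
    by (simp add: algebra_simps)
  finally show ?case .
qed

lemma carry_less:
  assumes "0 < n" and "\<forall>i<m. d (\<tau> i) < b" and "i \<le> m"
  shows "carry n b d \<tau> i < n"
  using assms(3)
proof (induction i)
  case 0
  then show ?case using assms(1) by simp
next
  case (Suc i)
  then have "d (\<tau> i) + 1 \<le> b" and "carry n b d \<tau> i < n"
    using assms(2) by (auto simp: Suc_le_eq)
  then have "n * d (\<tau> i) + carry n b d \<tau> i < n * (d (\<tau> i) + 1)"
    by simp
  also have "\<dots> \<le> n * b"
    using \<open>d (\<tau> i) + 1 \<le> b\<close> by (rule mult_le_mono2)
  finally show ?case
    by (simp add: less_mult_imp_div_less)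
qed

lemma carry_column_eqs:
  assumes digits: "\<forall>i\<le>k. e i < b" and eq: "numval b k e = n * numval b k (d \<circ> \<tau>)"
  shows "\<forall>i\<le>k. n * d (\<tau> i) + carry n b d \<tau> i = e i + b * carry n b d \<tau> (Suc i)"
    and "carry n b d \<tau> (Suc k) = 0"
proof -
  let ?c = "carry n b d \<tau>"
  define r where "r i = (n * d (\<tau> i) + ?c i) mod b" for i
  have "0 < b" using digits by auto
  then have r_less: "\<forall>i<Suc k. r i < b" by (simp add: r_def)
  have column: "n * d (\<tau> i) + ?c i = r i + b * ?c (Suc i)" for i
    unfolding r_def carry.simps(2) by (rule mod_mult_div_eq[symmetric])
  have "n * (\<Sum>i<Suc k. d (\<tau> i) * b ^ i) + ?c 0 = (\<Sum>i<Suc k. r i * b ^ i) + b ^ Suc k * ?c (Suc k)"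
    by (rule carry_chain_telescope) (use column in blast)
  then have expansion: "numval b k e = (\<Sum>i<Suc k. r i * b ^ i) + b ^ Suc k * ?c (Suc k)"
    using eq by (simp add: numval_lessThan)
  have digits_eq: "e i = r i" if "i \<le> k" for i
  proof -
    have "numval b k e div b ^ i mod b = e i"
      using digit_sum_div_mod[of "Suc k" e b i 0] digits that by (simp add: numval_lessThan)
    moreover have "numval b k e div b ^ i mod b = r i"
      using digit_sum_div_mod[of "Suc k" r b i "?c (Suc k)"] r_less that by (simp only: expansion)
    ultimately show ?thesis by simp
  qed
  then show "\<forall>i\<le>k. n * d (\<tau> i) + ?c i = e i + b * ?c (Suc i)"
    using column by (simp del: carry.simps(2))
  have "(\<Sum>i<Suc k. r i * b ^ i) = numval b k e"
    using digits_eq by (simp add: numval_lessThan)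
  then show "?c (Suc k) = 0" using expansion \<open>0 < b\<close> by simp
qed

lemma cyc_permutes: "cyc k permutes {0..k}"
proof (rule bij_imp_permutes)
  have "inj_on (cyc k) {0..k}" and "cyc k ` {0..k} \<subseteq> {0..k}"
    by (auto simp: inj_on_def cyc_def)
  then show "bij_betw (cyc k) {0..k} {0..k}"
    by (simp add: bij_betw_def endo_inj_surj)
qed (simp add: cyc_def)

lemma cyc_le: "i \<le> k \<Longrightarrow> cyc k i \<le> k"
  by (simp add: cyc_def)

lemma cyc_eq_Suc_mod: "i \<le> k \<Longrightarrow> cyc k i = Suc i mod Suc k"
  by (auto simp: cyc_def)

lemma funpow_cyc_0: "j \<le> k \<Longrightarrow> (cyc k ^^ j) 0 = j"
  by (induction j) (auto simp: cyc_def)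

text \<open>
  \<open>C i\<close> is the carry into column \<open>i\<close> of the multiplication \<open>n \<cdot> f = e\<close>; the carry out of
  column \<open>k\<close> is fed back into column \<open>0\<close>.
\<close>
definition cyclic_carry_chain ::
    "nat \<Rightarrow> nat \<Rightarrow> nat \<Rightarrow> (nat \<Rightarrow> nat) \<Rightarrow> (nat \<Rightarrow> nat) \<Rightarrow> (nat \<Rightarrow> nat) \<Rightarrow> bool" where
  "cyclic_carry_chain n b k e f C \<longleftrightarrow> (\<forall>i\<le>k. n * f i + C i = e i + b * C (cyc k i))"

lemma cyclic_carry_chain_cong:
  assumes "cyclic_carry_chain n b k e f C" and "\<forall>i\<le>k. C i = C' i"
  shows "cyclic_carry_chain n b k e f C'"
  using assms cyc_le by (auto simp: cyclic_carry_chain_def)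

lemma cyclic_carry_chain_value:
  assumes chain: "cyclic_carry_chain n b k e f C" and "C 0 = 0"
  shows "numval b k e = n * numval b k f"
proof -
  have "\<forall>i<Suc k. n * f i + C (i mod Suc k) = e i + b * C (Suc i mod Suc k)"
    using chain by (auto simp: cyclic_carry_chain_def cyc_eq_Suc_mod)
  from carry_chain_telescope[OF this] show ?thesis
    using \<open>C 0 = 0\<close> by (simp add: numval_lessThan)
qed

lemma cyclic_carry_chain_rotate:
  assumes "cyclic_carry_chain n b k e f C"
  shows "cyclic_carry_chain n b k (e \<circ> (cyc k ^^ j)) (f \<circ> (cyc k ^^ j)) (C \<circ> (cyc k ^^ j))"
  unfolding cyclic_carry_chain_def
proof (intro allI impI)
  fix i assume "i \<le> k"
  then have "(cyc k ^^ j) i \<le> k"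
    using permutes_in_image[OF permutes_funpow[OF cyc_permutes]] by simp
  then show "n * (f \<circ> (cyc k ^^ j)) i + (C \<circ> (cyc k ^^ j)) i
      = (e \<circ> (cyc k ^^ j)) i + b * (C \<circ> (cyc k ^^ j)) (cyc k i)"
    using assms by (simp add: cyclic_carry_chain_def funpow_swap1)
qed

lemma cyclic_carry_chain_rotation_value:
  assumes "cyclic_carry_chain n b k e f C" and "j \<le> k" and "C j = 0"
  shows "numval b k (e \<circ> (cyc k ^^ j)) = n * numval b k (f \<circ> (cyc k ^^ j))"
  using cyclic_carry_chain_value[OF cyclic_carry_chain_rotate[OF assms(1)]] assms(2,3)
  by (simp add: funpow_cyc_0)

lemma complement_column:
  fixes n b e f x y :: nat
  assumes "n * f + x = e + b * y" and "e < b" and "f < b" and "x < n" and "y < n"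
  shows "n * dbar b f + (n - 1 - x) = dbar b e + b * (n - 1 - y)"
proof -
  have casts: "int (dbar b f) = int b - 1 - int f" "int (dbar b e) = int b - 1 - int e"
    "int (n - 1 - x) = int n - 1 - int x" "int (n - 1 - y) = int n - 1 - int y"
    using assms(2-5) by (simp_all add: dbar_def of_nat_diff)
  have "int n * int f + int x = int e + int b * int y"
    using arg_cong[OF assms(1), of int] by simp
  then have "int (n * dbar b f + (n - 1 - x)) = int (dbar b e + b * (n - 1 - y))"
    unfolding of_nat_add of_nat_mult casts by (simp add: algebra_simps)
  then show ?thesis
    by (simp only: of_nat_eq_iff)
qed

lemma cyclic_carry_chain_complement:
  assumes chain: "cyclic_carry_chain n b k e f C"
    and bounds: "\<forall>i\<le>k. e i < b \<and> f i < b \<and> C i < n"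
  shows "cyclic_carry_chain n b k (dbar b \<circ> e) (dbar b \<circ> f) (\<lambda>i. n - 1 - C i)"
  unfolding cyclic_carry_chain_def
proof (intro allI impI)
  fix i assume "i \<le> k"
  with chain bounds cyc_le[OF this] show
    "n * (dbar b \<circ> f) i + (n - 1 - C i) = (dbar b \<circ> e) i + b * (n - 1 - C (cyc k i))"
    using complement_column[of n "f i" "C i" "e i" b "C (cyc k i)"]
    by (simp add: cyclic_carry_chain_def)
qed

lemma cyclic_carry_chain_carry:
  assumes "\<forall>i\<le>k. e i < b" and "numval b k e = n * numval b k (d \<circ> \<tau>)"
  shows "cyclic_carry_chain n b k e (d \<circ> \<tau>) (carry n b d \<tau>)"
  using carry_column_eqs[OF assms]
  by (auto simp: cyclic_carry_chain_def cyc_def simp del: carry.simps(2))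

lemma trans_seq_eqD:
  assumes "trans_seq c k \<phi> = trans_seq c k \<psi>" and "i \<le> k"
  shows "c (\<phi> i) = c (\<psi> i)"
proof -
  have "i \<in> set [0..<Suc k]" using assms(2) by (simp del: upt_Suc)
  with assms(1) have "(c (\<phi> i), c (\<phi> (if i < k then i + 1 else 0)))
      = (c (\<psi> i), c (\<psi> (if i < k then i + 1 else 0)))"
    unfolding trans_seq_def map_eq_conv by (rule bspec)
  then show ?thesis by simp
qed

lemma symmetry_carry_eq:
  assumes "n < b" and "0 < n"
    and perm: "is_permutiple n b k d \<sigma>" and sym: "is_symmetry n b k d \<sigma> \<phi>"
    and fixed: "\<forall>i\<le>k. carry n b d \<sigma> (\<phi> i) = carry n b d \<sigma> i"
    and "i \<le> k"
  shows "carry n b d (\<sigma> \<circ> \<phi>) i = carry n b d \<sigma> i"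
proof -
  let ?c = "carry n b d \<sigma>" and ?c' = "carry n b d (\<sigma> \<circ> \<phi>)"
  have \<sigma>: "\<sigma> permutes {0..k}" and digits: "\<forall>i\<le>k. d i < b"
    and eq: "numval b k d = n * numval b k (d \<circ> \<sigma>)"
    using perm by (auto simp: is_permutiple_def)
  have \<phi>: "\<phi> permutes {0..k}" and eq': "numval b k (d \<circ> \<phi>) = n * numval b k (d \<circ> (\<sigma> \<circ> \<phi>))"
    using sym by (auto simp: is_symmetry_def o_assoc)
  have "\<phi> i \<le> k" using permutes_in_image[OF \<phi>] \<open>i \<le> k\<close> by simp
  have in_range: "\<phi> l \<le> k" "\<sigma> l \<le> k" if "l \<le> k" for l
    using permutes_in_image[OF \<phi>] permutes_in_image[OF \<sigma>] that by auto
  have "n * d (\<sigma> (\<phi> i)) + ?c' i = d (\<phi> i) + b * ?c' (Suc i)"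
    using carry_column_eqs(1)[OF _ eq'] digits in_range \<open>i \<le> k\<close> by (simp del: carry.simps(2))
  moreover have "n * d (\<sigma> (\<phi> i)) + ?c (\<phi> i) = d (\<phi> i) + b * ?c (Suc (\<phi> i))"
    using carry_column_eqs(1)[OF digits eq] \<open>\<phi> i \<le> k\<close> by (simp del: carry.simps(2))
  txt \<open>Both columns have input digit \<open>d (\<sigma> (\<phi> i))\<close> and output digit \<open>d (\<phi> i)\<close>, so their
    incoming carries agree modulo \<open>b\<close>.\<close>
  ultimately have "?c' i + b * ?c (Suc (\<phi> i)) = ?c (\<phi> i) + b * ?c' (Suc i)"
    by linarith
  then have "?c' i mod b = ?c (\<phi> i) mod b"
    by (metis mod_mult_self2)
  moreover have "?c' i < b" "?c (\<phi> i) < b"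
    using carry_less[of n "Suc k" d "\<sigma> \<circ> \<phi>" b i] carry_less[of n "Suc k" d \<sigma> b "\<phi> i"]
      \<open>n < b\<close> \<open>0 < n\<close> digits in_range \<open>i \<le> k\<close> \<open>\<phi> i \<le> k\<close> by auto
  ultimately show ?thesis
    using fixed \<open>i \<le> k\<close> by (simp del: carry.simps(2))
qed

lemma fixing_symmetry_cyclic_carry_chain:
  assumes "n < b" and "0 < n"
    and perm: "is_permutiple n b k d \<sigma>" and sym: "is_symmetry n b k d \<sigma> \<phi>"
    and fixed: "\<forall>i\<le>k. carry n b d \<sigma> (\<phi> i) = carry n b d \<sigma> i"
  shows "cyclic_carry_chain n b k (d \<circ> \<phi>) (d \<circ> \<sigma> \<circ> \<phi>) (carry n b d \<sigma>)"
proof -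
  have \<phi>: "\<phi> permutes {0..k}" and eq: "numval b k (d \<circ> \<phi>) = n * numval b k (d \<circ> (\<sigma> \<circ> \<phi>))"
    using sym by (auto simp: is_symmetry_def o_assoc)
  have "\<forall>i\<le>k. (d \<circ> \<phi>) i < b"
    using perm permutes_in_image[OF \<phi>] by (simp add: is_permutiple_def)
  from cyclic_carry_chain_carry[OF this eq]
  have "cyclic_carry_chain n b k (d \<circ> \<phi>) (d \<circ> \<sigma> \<circ> \<phi>) (carry n b d (\<sigma> \<circ> \<phi>))"
    by (simp add: o_assoc)
  then show ?thesis
    by (rule cyclic_carry_chain_cong) (simp add: symmetry_carry_eq[OF assms])
qed

lemma is_permutiple_conjugate:
  assumes \<rho>: "\<rho> permutes {0..k}" and \<sigma>: "\<sigma> permutes {0..k}" and digits: "\<forall>i\<le>k. e i < b"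
    and eq: "numval b k (e \<circ> \<rho>) = n * numval b k (e \<circ> \<sigma> \<circ> \<rho>)"
  shows "is_permutiple n b k (e \<circ> \<rho>) (inv \<rho> \<circ> \<sigma> \<circ> \<rho>)"
proof -
  have "e \<circ> \<rho> \<circ> (inv \<rho> \<circ> \<sigma> \<circ> \<rho>) = e \<circ> \<sigma> \<circ> \<rho>"
    using permutes_inverses(1)[OF \<rho>] by (simp add: fun_eq_iff)
  moreover have "inv \<rho> \<circ> \<sigma> \<circ> \<rho> permutes {0..k}"
    by (intro permutes_compose permutes_inv \<rho> \<sigma>)
  moreover have "\<forall>i\<le>k. (e \<circ> \<rho>) i < b"
    using digits permutes_in_image[OF \<rho>] by simp
  ultimately show ?thesis
    using eq by (simp add: is_permutiple_def)
qed

theorem theorem26: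
  fixes n b k :: nat and d \<sigma> \<phi> :: "nat \<Rightarrow> nat"
  assumes "1 < n" and "n < b"
    and perm: "is_permutiple n b k d \<sigma>"
    and sym: "is_symmetry n b k d \<sigma> \<phi>"
    and fixS: "trans_seq (carry n b d \<sigma>) k \<phi> = trans_seq (carry n b d \<sigma>) k id"
  shows
    "(\<forall>j. j \<le> k \<and> carry n b d \<sigma> j = 0 \<longrightarrow>
        is_symmetry n b k d \<sigma> (\<phi> \<circ> (cyc k ^^ j)) \<and>
        is_permutiple n b k (d \<circ> \<phi> \<circ> (cyc k ^^ j))
          (inv (cyc k ^^ j) \<circ> inv \<phi> \<circ> \<sigma> \<circ> \<phi> \<circ> (cyc k ^^ j)))
     \<and>
     (\<forall>j. 0 < j \<and> j \<le> k \<and> carry n b d \<sigma> j = n - 1 \<longrightarrow>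
        is_permutiple n b k (dbar b \<circ> d \<circ> \<phi> \<circ> (cyc k ^^ j))
          (inv (cyc k ^^ j) \<circ> inv \<phi> \<circ> \<sigma> \<circ> \<phi> \<circ> (cyc k ^^ j)))"
proof -
  let ?c = "carry n b d \<sigma>" and ?\<psi> = "\<lambda>j. cyc k ^^ j"
  have "0 < n" and "0 < b" using assms(1,2) by simp_all
  have \<sigma>: "\<sigma> permutes {0..k}" and digits: "\<forall>i\<le>k. d i < b"
    using perm by (auto simp: is_permutiple_def)
  have \<phi>: "\<phi> permutes {0..k}" using sym by (simp add: is_symmetry_def)
  have chain: "cyclic_carry_chain n b k (d \<circ> \<phi>) (d \<circ> \<sigma> \<circ> \<phi>) ?c"
    using fixing_symmetry_cyclic_carry_chain[OF assms(2) \<open>0 < n\<close> perm sym]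
      trans_seq_eqD[OF fixS] by simp
  have \<rho>: "\<phi> \<circ> ?\<psi> j permutes {0..k}" for j
    by (intro permutes_compose permutes_funpow cyc_permutes \<phi>)
  have conjugate: "inv (?\<psi> j) \<circ> inv \<phi> \<circ> \<sigma> \<circ> \<phi> \<circ> ?\<psi> j = inv (\<phi> \<circ> ?\<psi> j) \<circ> \<sigma> \<circ> (\<phi> \<circ> ?\<psi> j)" for j
    using permutes_bij[OF \<phi>] permutes_bij[OF permutes_funpow[OF cyc_permutes]]
    by (simp add: o_inv_distrib o_assoc)
  show ?thesis
  proof (intro conjI; intro allI impI; elim conjE)
    fix j assume "j \<le> k" and "?c j = 0"
    with chain have "numval b k (d \<circ> \<phi> \<circ> ?\<psi> j) = n * numval b k (d \<circ> \<sigma> \<circ> \<phi> \<circ> ?\<psi> j)"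
      by (rule cyclic_carry_chain_rotation_value)
    then show "is_symmetry n b k d \<sigma> (\<phi> \<circ> ?\<psi> j) \<and>
        is_permutiple n b k (d \<circ> \<phi> \<circ> ?\<psi> j) (inv (?\<psi> j) \<circ> inv \<phi> \<circ> \<sigma> \<circ> \<phi> \<circ> ?\<psi> j)"
      using is_permutiple_conjugate[OF \<rho> \<sigma> digits] \<rho> by (simp add: is_symmetry_def conjugate o_assoc)
  next
    fix j assume "0 < j" and "j \<le> k" and "?c j = n - 1"
    have "\<forall>i\<le>k. (d \<circ> \<phi>) i < b \<and> (d \<circ> \<sigma> \<circ> \<phi>) i < b \<and> ?c i < n"
      using digits permutes_in_image[OF \<phi>] permutes_in_image[OF \<sigma>]
        carry_less[OF \<open>0 < n\<close>, of "Suc k" d \<sigma> b] by auto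
    with chain have "cyclic_carry_chain n b k (dbar b \<circ> (d \<circ> \<phi>)) (dbar b \<circ> (d \<circ> \<sigma> \<circ> \<phi>)) (\<lambda>i. n - 1 - ?c i)"
      by (rule cyclic_carry_chain_complement)
    then have "numval b k (dbar b \<circ> d \<circ> \<phi> \<circ> ?\<psi> j) = n * numval b k (dbar b \<circ> d \<circ> \<sigma> \<circ> \<phi> \<circ> ?\<psi> j)"
      using cyclic_carry_chain_rotation_value \<open>j \<le> k\<close> \<open>?c j = n - 1\<close> by (simp add: o_assoc)
    moreover have "\<forall>i\<le>k. (dbar b \<circ> d) i < b"
      using \<open>0 < b\<close> by (simp add: dbar_def)
    ultimately show "is_permutiple n b k (dbar b \<circ> d \<circ> \<phi> \<circ> ?\<psi> j) (inv (?\<psi> j) \<circ> inv \<phi> \<circ> \<sigma> \<circ> \<phi> \<circ> ?\<psi> j)"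
      using is_permutiple_conjugate[OF \<rho> \<sigma>] by (simp add: conjugate o_assoc)
  qed
qed

end
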